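(* Let $\mathcal{F}$ be a filtration of a finite simplicial complex and $\sigma\notin\mathcal{F}$ a simplex such that $\mathcal{F}\cup\sigma$ (the filtration with $\sigma$ inserted at some filtration value) is a valid filtration. For $\alpha\in(1,\infty)$ and $k\ge1$ let $\Pi_k(\alpha;\mathcal{F})$ be the number of points $(b,d)\in\mathrm{dgm}_k(\mathcal{F})$ with $d/b\ge\alpha$. If $\dim\sigma\in\{k,k+1\}$, then \[ \Pi_k(\alpha;\mathcal{F})-1\le\Pi_k(\alpha;\mathcal{F}\cup\sigma)\le\Pi_k(\alpha;\mathcal{F})+1; \] otherwise $\Pi_k(\alpha;\mathcal{F}\cup\sigma)=\Pi_k(\alpha;\mathcal{F})$.
   Context: A filtration assigns to each simplex a filtration value $w$ such that faces enter no later than their cofaces; the $k$-th persistent homology (field coefficients) decomposes into intervals $[b,d)$ with $b<d\le\infty$, and $\mathrm{dgm}_k$ is the multiset of such $(b,d)$. Filtration values of the simplices contributing births are taken positive so that the ratio $d/b$ is defined, with $d=\infty$ giving ratio $\infty$. Ties between simplices with equal filtration values are broken by an arbitrary but consistent total order. *)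

theory Defs
  imports "HOL-Analysis.Analysis" "HOL-Library.Function_Algebras" "HOL-Library.Multiset"
begin

text \<open>Simplices are finite nonempty sets of vertices; vertices carry a linear order,
  used only to orient simplices (sign of a face).  A filtration is given by a list of
  distinct simplices (the total order, ties already broken) and a weight function
  assigning the filtration value to each simplex.\<close>

definition valid_filtration :: "('v::linorder) set list \<Rightarrow> ('v set \<Rightarrow> real) \<Rightarrow> bool" where
  "valid_filtration L w \<longleftrightarrow>
     distinct L \<and>
     (\<forall>i < length L. finite (L ! i) \<and> L ! i \<noteq> {} \<and>
        (\<forall>\<tau>. \<tau> \<noteq> {} \<and> \<tau> \<subset> L ! i \<longrightarrow> \<tau> \<in> set (take i L))) \<and>
     sorted (map w L)"

definition insert_simplex ::
  "'v set list \<Rightarrow> ('v set \<Rightarrow> real) \<Rightarrow> 'v set \<Rightarrow> real \<Rightarrow> nat \<Rightarrow> 'v set list \<times> ('v set \<Rightarrow> real)" where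
  "insert_simplex L w s a p = (take p L @ s # drop p L, w(s := a))"

definition chains :: "'f itself \<Rightarrow> 'v set set \<Rightarrow> nat \<Rightarrow> ('v set \<Rightarrow> 'f::field) set" where
  "chains _ K k = {c. \<forall>\<tau>. c \<tau> \<noteq> 0 \<longrightarrow> \<tau> \<in> K \<and> card \<tau> = k + 1}"

text \<open>Simplicial boundary with the orientation induced by the vertex order:
  the face obtained by deleting vertex v from the sorted simplex gets sign (-1)^(position of v).\<close>
definition bd :: "('v::linorder set \<Rightarrow> 'f::field) \<Rightarrow> 'v set \<Rightarrow> 'f" where
  "bd c \<tau> = (\<Sum>v \<in> {v. v \<notin> \<tau> \<and> c (insert v \<tau>) \<noteq> 0}.
               (-1) ^ card {u \<in> \<tau>. u < v} * c (insert v \<tau>))"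

definition fscale :: "'f::field \<Rightarrow> ('a \<Rightarrow> 'f) \<Rightarrow> ('a \<Rightarrow> 'f)" where
  "fscale a f = (\<lambda>x. a * f x)"

abbreviation fdim :: "('a \<Rightarrow> 'f::field) set \<Rightarrow> nat" where
  "fdim S \<equiv> vector_space.dim fscale S"

definition cycles :: "'f itself \<Rightarrow> 'v::linorder set set \<Rightarrow> nat \<Rightarrow> ('v set \<Rightarrow> 'f::field) set" where
  "cycles F K k = {c \<in> chains F K k. bd c = 0}"

definition boundaries :: "'f itself \<Rightarrow> 'v::linorder set set \<Rightarrow> nat \<Rightarrow> ('v set \<Rightarrow> 'f::field) set" where
  "boundaries F K k = bd ` chains F K (k + 1)"

text \<open>Rank of the map H_k(K_i) \<rightarrow> H_k(K_j) induced by inclusion, K_i = first i simplices.\<close>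
definition prank :: "'f::field itself \<Rightarrow> 'v::linorder set list \<Rightarrow> nat \<Rightarrow> nat \<Rightarrow> nat \<Rightarrow> int" where
  "prank F L k i j =
     int (fdim (cycles F (set (take i L)) k))
     - int (fdim (cycles F (set (take i L)) k \<inter> boundaries F (set (take j L)) k))"

text \<open>Multiplicity of the index interval born when simplex i (1-based) enters and dying
  when simplex j enters; and of the essential interval born at i.\<close>
definition pmult :: "'f::field itself \<Rightarrow> 'v::linorder set list \<Rightarrow> nat \<Rightarrow> nat \<Rightarrow> nat \<Rightarrow> int" where
  "pmult F L k i j = prank F L k i (j - 1) - prank F L k (i - 1) (j - 1)
                     - prank F L k i j + prank F L k (i - 1) j"

definition pmult_inf :: "'f::field itself \<Rightarrow> 'v::linorder set list \<Rightarrow> nat \<Rightarrow> nat \<Rightarrow> int" where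
  "pmult_inf F L k i = prank F L k i (length L) - prank F L k (i - 1) (length L)"

definition dgm :: "'f::field itself \<Rightarrow> 'v::linorder set list \<Rightarrow> ('v set \<Rightarrow> real) \<Rightarrow> nat
                    \<Rightarrow> (real \<times> ereal) multiset" where
  "dgm F L w k =
     (\<Sum>i \<in> {1..length L}. \<Sum>j \<in> {i<..length L}.
        if w (L ! (i - 1)) < w (L ! (j - 1))
        then replicate_mset (nat (pmult F L k i j)) (w (L ! (i - 1)), ereal (w (L ! (j - 1))))
        else {#})
   + (\<Sum>i \<in> {1..length L}. replicate_mset (nat (pmult_inf F L k i)) (w (L ! (i - 1)), \<infinity>))"

definition Pi_count :: "'f::field itself \<Rightarrow> 'v::linorder set list \<Rightarrow> ('v set \<Rightarrow> real) \<Rightarrow> nat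
                        \<Rightarrow> real \<Rightarrow> nat" where
  "Pi_count F L w k \<alpha> = size (filter_mset (\<lambda>(b, d). d / ereal b \<ge> ereal \<alpha>) (dgm F L w k))"

end

(* Write Z_i and B_j for the k-cycles of the first i simplices and the k-boundaries of the
   first j simplices, so that prank(i, j) = dim Z_i - dim (Z_i \<inter> B_j).  The multiplicity of
   the interval [i, j) is a second difference of prank, so the intervals born at the i-th simplex
   with d/b >= alpha, namely those dying after the first T_i simplices, where T_i counts the
   simplices of value below alpha times the i-th value, number prank(i, T_i) - prank(i - 1, T_i)
   by telescoping.  Hence Pi_k is the sum of these differences over i.

   Inserting sigma at position p shifts the later indices by one and the thresholds along
   with them, so the two sums can be compared term by term.  If sigma is neither a k- nor a
   (k+1)-simplex, no Z_i or B_j changes.  If sigma is a k-simplex, only the Z_i change, each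
   by dimension 0 or 1, and the corrections telescope to a single term in {0, 1}.  If sigma
   is a (k+1)-simplex with boundary x, then B_j gains at most the direction x; the i-th term
   drops by one exactly when x is new in B_j and lies in Z_i + B_j but not in Z_(i-1) + B_j,
   and as both Z_i and the thresholds grow with i this happens at most once. *)

theory Submission
  imports Defs
begin

section \<open>Dimension counting in vector spaces\<close>

context vector_space
begin

lemma dim_span_insert:
  assumes S: "subspace S" and G: "finite G" "S \<subseteq> span G"
  shows "dim (span (insert y S)) = dim S + (if y \<in> S then 0 else 1)"
proof (cases "y \<in> S")
  case True
  then show ?thesis using S by (simp add: insert_absorb)
next
  case False
  obtain B where B: "B \<subseteq> S" "independent B" "S \<subseteq> span B" "card B = dim S"
    using basis_exists by blast
  have span_S: "span S = S" using S by simp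
  have "finite B"
    using independent_span_bound[OF G(1) B(2)] B(1) G(2) by blast
  have span_B: "span B = S"
    using B(1,3) S by (rule span_subspace)
  then have "independent (insert y B)"
    using False B(2) by (simp add: independent_insertI)
  moreover have "span (insert y B) = span (insert y S)"
    by (simp add: span_insert span_B span_S)
  ultimately have "dim (span (insert y S)) = card (insert y B)"
    by (metis dim_eq_card dim_span)
  also have "\<dots> = dim S + 1"
    using False B(1,4) \<open>finite B\<close> by (subst card_insert_disjoint) auto
  finally show ?thesis using False by simp
qed

lemma inter_span_insert_eq_if_not_in_span:
  assumes B: "subspace B" and x: "x \<notin> span (Z \<union> B)"
  shows "Z \<inter> span (insert x B) = Z \<inter> B"
proof
  have span_B: "span B = B" using B by simp
  show "Z \<inter> span (insert x B) \<subseteq> Z \<inter> B"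
  proof
    fix v assume v: "v \<in> Z \<inter> span (insert x B)"
    then obtain c where c: "v - scale c x \<in> B"
      by (auto simp: span_insert span_B)
    have "c = 0"
    proof (rule ccontr)
      assume "c \<noteq> 0"
      then have "x = scale (1 / c) (v - (v - scale c x))" by simp
      also have "\<dots> \<in> span (Z \<union> B)"
        using v c by (intro span_scale span_diff[of v] span_base) auto
      finally show False using x by contradiction
    qed
    then show "v \<in> Z \<inter> B" using v c by simp
  qed
qed (auto intro: span_base)

lemma inter_span_insert_eq_span_insert:
  assumes Z: "subspace Z" and B: "subspace B" and zb: "z \<in> Z" "b \<in> B" "x = z + b"
  shows "Z \<inter> span (insert x B) = span (insert z (Z \<inter> B))"
proof
  have span_B: "span B = B" using B by simp
  show "Z \<inter> span (insert x B) \<subseteq> span (insert z (Z \<inter> B))"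
  proof
    fix v assume v: "v \<in> Z \<inter> span (insert x B)"
    then obtain c where c: "v - scale c x \<in> B"
      by (auto simp: span_insert span_B)
    have "v - scale c z = (v - scale c x) + scale c b"
      using zb(3) by (simp add: scale_right_distrib)
    then have "v - scale c z \<in> Z \<inter> B"
      using v c zb Z B by (metis IntD1 IntI subspace_add subspace_diff subspace_scale)
    then show "v \<in> span (insert z (Z \<inter> B))"
      unfolding span_insert by (auto intro: span_base)
  qed
  have "z - scale 1 x \<in> B"
    using zb(2,3) B by (simp add: subspace_neg)
  then have "z \<in> span (insert x B)"
    unfolding span_insert span_B by blast
  then show "span (insert z (Z \<inter> B)) \<subseteq> Z \<inter> span (insert x B)"
    using zb(1) Z by (intro span_minimal) (auto intro: subspace_inter span_base)
qed

lemma dim_inter_span_insert: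
  assumes Z: "subspace Z" and B: "subspace B" and G: "finite G" "Z \<subseteq> span G"
  shows "dim (Z \<inter> span (insert x B)) =
    dim (Z \<inter> B) + (if x \<notin> B \<and> x \<in> span (Z \<union> B) then 1 else 0)"
proof -
  have span_Z: "span Z = Z" and span_B: "span B = B" using Z B by simp_all
  consider "x \<in> B" | "x \<notin> span (Z \<union> B)" | "x \<notin> B" "x \<in> span (Z \<union> B)"
    by blast
  then show ?thesis
  proof cases
    case 1
    then show ?thesis by (simp add: insert_absorb span_B)
  next
    case 2
    then show ?thesis by (simp add: inter_span_insert_eq_if_not_in_span[OF B])
  next
    case 3
    obtain z b where zb: "z \<in> Z" "b \<in> B" "x = z + b"
      using 3(2) by (auto simp: span_Un span_Z span_B)
    have "z \<notin> B" using 3(1) zb B by (metis subspace_add)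
    then show ?thesis
      using dim_span_insert[OF subspace_inter[OF Z B] G(1), of z] G(2) 3
      by (auto simp: inter_span_insert_eq_span_insert[OF Z B zb])
  qed
qed

end

interpretation fspace: vector_space "fscale :: 'f::field \<Rightarrow> ('a \<Rightarrow> 'f) \<Rightarrow> 'a \<Rightarrow> 'f"
  by unfold_locales (auto simp: fscale_def fun_eq_iff algebra_simps)

lemma fscale_apply [simp]: "fscale c f x = c * f x"
  by (simp add: fscale_def)

lemma fdim_eq_fdim_vanishing_at:
  fixes S :: "('a \<Rightarrow> 'f::field) set"
  assumes S: "fspace.subspace S" and G: "finite G" "S \<subseteq> fspace.span G"
  shows "fdim S = fdim {v \<in> S. v t = 0} + (if \<exists>v\<in>S. v t \<noteq> 0 then 1 else 0)"
proof (cases "\<exists>v\<in>S. v t \<noteq> 0")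
  case False
  then have "{v \<in> S. v t = 0} = S" by auto
  then show ?thesis using False by simp
next
  case True
  then obtain y where y: "y \<in> S" "y t \<noteq> 0" by blast
  define S0 where "S0 = {v \<in> S. v t = 0}"
  have S0: "fspace.subspace S0"
    using S unfolding S0_def fspace.subspace_def by auto
  have "S = fspace.span (insert y S0)"
  proof
    show "S \<subseteq> fspace.span (insert y S0)"
    proof
      fix v assume "v \<in> S"
      then have "v - fscale (v t / y t) y \<in> S0"
        using S y by (simp add: S0_def fspace.subspace_diff fspace.subspace_scale)
      then show "v \<in> fspace.span (insert y S0)"
        unfolding fspace.span_insert by (auto intro: fspace.span_base)
    qed
    show "fspace.span (insert y S0) \<subseteq> S"
      using S y by (intro fspace.span_minimal) (auto simp: S0_def)
  qed
  then have "fdim S = fdim S0 + 1"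
    using fspace.dim_span_insert[OF S0 G(1), of y] G(2) y by (auto simp: S0_def)
  then show ?thesis using True by (simp add: S0_def)
qed

section \<open>Simplicial chains, cycles and boundaries\<close>

lemma chains_subspace: "fspace.subspace (chains F K m)"
  unfolding fspace.subspace_def chains_def by (auto; metis add.right_neutral)

lemma chains_subset_span:
  fixes F :: "'f::field itself"
  assumes "finite K"
  shows "chains F K m \<subseteq> fspace.span ((\<lambda>\<tau>. indicator {\<tau>} :: 'a set \<Rightarrow> 'f) ` K)"
proof
  fix c assume c: "c \<in> chains F K m"
  have sum_apply: "(\<Sum>\<tau>\<in>A. g \<tau>) x = (\<Sum>\<tau>\<in>A. g \<tau> x)" for A and g :: "'a set \<Rightarrow> 'a set \<Rightarrow> 'f" and x
    by (induction A rule: infinite_finite_induct) auto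
  have "c = (\<Sum>\<tau>\<in>K. fscale (c \<tau>) (indicator {\<tau>}))"
    using c assms
    by (auto simp: fun_eq_iff sum_apply chains_def indicator_def if_distrib Int_insert_right
        cong: if_cong)
  also have "\<dots> \<in> fspace.span ((\<lambda>\<tau>. indicator {\<tau>}) ` K)"
    by (intro fspace.span_sum fspace.span_scale fspace.span_base) auto
  finally show "c \<in> fspace.span ((\<lambda>\<tau>. indicator {\<tau>}) ` K)" .
qed

lemma chains_mono: "K \<subseteq> K' \<Longrightarrow> chains F K m \<subseteq> chains F K' m"
  by (auto simp: chains_def)

lemma cycles_mono: "K \<subseteq> K' \<Longrightarrow> cycles F K m \<subseteq> cycles F K' m"
  unfolding cycles_def using chains_mono by blast

lemma boundaries_mono: "K \<subseteq> K' \<Longrightarrow> boundaries F K m \<subseteq> boundaries F K' m"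
  unfolding boundaries_def using chains_mono by blast

lemma cycles_eq_vanishing_at:
  "t \<notin> K \<Longrightarrow> cycles F K m = {c \<in> cycles F (insert t K) m. c t = 0}"
  by (auto simp: cycles_def chains_def)

lemma chains_insert_other_dim: "card s \<noteq> m + 1 \<Longrightarrow> chains F (insert s K) m = chains F K m"
  by (auto simp: chains_def)

lemma cycles_insert_other_dim: "card s \<noteq> m + 1 \<Longrightarrow> cycles F (insert s K) m = cycles F K m"
  by (simp add: cycles_def chains_insert_other_dim)

lemma boundaries_insert_other_dim:
  "card s \<noteq> m + 2 \<Longrightarrow> boundaries F (insert s K) m = boundaries F K m"
  by (simp add: boundaries_def chains_insert_other_dim)

lemma bd_eq_sum_cofaces:
  assumes "finite K" "c \<in> chains F K m"
  shows "bd c t = (\<Sum>v \<in> {v. v \<notin> t \<and> insert v t \<in> K}. (-1) ^ card {u \<in> t. u < v} * c (insert v t))"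
proof -
  have "inj_on (\<lambda>v. insert v t) {v. v \<notin> t \<and> insert v t \<in> K}"
    by (auto simp: inj_on_def)
  moreover have "(\<lambda>v. insert v t) ` {v. v \<notin> t \<and> insert v t \<in> K} \<subseteq> K"
    by auto
  ultimately have "finite {v. v \<notin> t \<and> insert v t \<in> K}"
    using assms(1) finite_imageD finite_subset by metis
  then show ?thesis
    unfolding bd_def using assms(2)
    by (intro sum.mono_neutral_left) (auto simp: chains_def)
qed

lemma bd_add:
  assumes "finite K" "c \<in> chains F K m" "d \<in> chains F K m"
  shows "bd (c + d) = bd c + bd d"
proof
  fix t
  have "c + d \<in> chains F K m"
    by (rule fspace.subspace_add[OF chains_subspace assms(2,3)])
  then show "bd (c + d) t = (bd c + bd d) t"
    using assms by (simp add: bd_eq_sum_cofaces[OF assms(1)] sum.distrib algebra_simps)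
qed

lemma bd_fscale:
  assumes "finite K" "c \<in> chains F K m"
  shows "bd (fscale a c) = fscale a (bd c)"
proof
  fix t
  have "fscale a c \<in> chains F K m"
    by (rule fspace.subspace_scale[OF chains_subspace assms(2)])
  then show "bd (fscale a c) t = fscale a (bd c) t"
    using assms by (simp add: bd_eq_sum_cofaces[OF assms(1)] sum_distrib_left algebra_simps)
qed

lemma bd_zero [simp]: "bd 0 = 0"
  by (simp add: bd_def fun_eq_iff)

lemma cycles_subspace:
  assumes "finite K"
  shows "fspace.subspace (cycles F K m)"
  using chains_subspace[unfolded fspace.subspace_def]
  unfolding fspace.subspace_def cycles_def
  by (auto simp: bd_add[OF assms] bd_fscale[OF assms])

lemma boundaries_subspace:
  assumes "finite K"
  shows "fspace.subspace (boundaries F K m)"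
  unfolding fspace.subspace_def boundaries_def
proof (intro conjI ballI allI)
  show "0 \<in> bd ` chains F K (m + 1)"
    using fspace.subspace_0[OF chains_subspace] by (metis bd_zero image_eqI)
next
  fix x y assume "x \<in> bd ` chains F K (m + 1)" "y \<in> bd ` chains F K (m + 1)"
  then obtain c d where "c \<in> chains F K (m + 1)" "d \<in> chains F K (m + 1)" "x = bd c" "y = bd d"
    by blast
  then show "x + y \<in> bd ` chains F K (m + 1)"
    using bd_add[OF assms] fspace.subspace_add[OF chains_subspace] by (metis image_eqI)
next
  fix a x assume "x \<in> bd ` chains F K (m + 1)"
  then obtain c where "c \<in> chains F K (m + 1)" "x = bd c"
    by blast
  then show "fscale a x \<in> bd ` chains F K (m + 1)"
    using bd_fscale[OF assms] fspace.subspace_scale[OF chains_subspace] by (metis image_eqI)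
qed

lemma boundaries_insert:
  fixes F :: "'f::field itself" and K :: "'v::linorder set set"
  assumes K: "finite K" and s: "card s = m + 2"
  shows "boundaries F (insert s K) m =
    fspace.span (insert (bd (indicator {s} :: 'v set \<Rightarrow> 'f)) (boundaries F K m))"
proof
  have fin: "finite (insert s K)" using K by simp
  have s_chain: "indicator {s} \<in> chains F (insert s K) (m + 1)"
    using s by (simp add: chains_def indicator_def)
  show "boundaries F (insert s K) m \<subseteq> fspace.span (insert (bd (indicator {s})) (boundaries F K m))"
  proof
    fix y assume "y \<in> boundaries F (insert s K) m"
    then obtain c where c: "c \<in> chains F (insert s K) (m + 1)" "y = bd c"
      unfolding boundaries_def by blast
    define c0 where "c0 = c - fscale (c s) (indicator {s})"
    have c0: "c0 \<in> chains F K (m + 1)"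
      using c(1) by (simp add: chains_def c0_def indicator_def) blast
    have c0': "c0 \<in> chains F (insert s K) (m + 1)"
      using c0 chains_mono[of K "insert s K"] by blast
    have "bd c = bd (c0 + fscale (c s) (indicator {s}))"
      by (simp add: c0_def)
    also have "\<dots> = bd c0 + fscale (c s) (bd (indicator {s}))"
      using bd_add[OF fin c0' fspace.subspace_scale[OF chains_subspace s_chain]]
        bd_fscale[OF fin s_chain]
      by simp
    finally have "bd c0 = y - fscale (c s) (bd (indicator {s}))"
      using c(2) by simp
    with c0 have "y - fscale (c s) (bd (indicator {s})) \<in> boundaries F K m"
      unfolding boundaries_def by (metis image_eqI)
    then show "y \<in> fspace.span (insert (bd (indicator {s})) (boundaries F K m))"
      unfolding fspace.span_insert by (auto intro: fspace.span_base)
  qed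
  have "bd (indicator {s}) \<in> boundaries F (insert s K) m"
    using s_chain by (simp add: boundaries_def)
  moreover have "boundaries F K m \<subseteq> boundaries F (insert s K) m"
    by (rule boundaries_mono) blast
  ultimately show
    "fspace.span (insert (bd (indicator {s})) (boundaries F K m)) \<subseteq> boundaries F (insert s K) m"
    by (intro fspace.span_minimal boundaries_subspace fin) auto
qed

lemma fdim_cycles_insert_inter:
  fixes W :: "('v::linorder set \<Rightarrow> 'f::field) set"
  assumes K: "finite K" and t: "t \<notin> K" and W: "fspace.subspace W"
  shows "fdim (cycles TYPE('f) (insert t K) m \<inter> W) = fdim (cycles TYPE('f) K m \<inter> W)
    + (if \<exists>v \<in> cycles TYPE('f) (insert t K) m \<inter> W. v t \<noteq> 0 then 1 else 0)"
proof -
  have S: "fspace.subspace (cycles TYPE('f) (insert t K) m \<inter> W)"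
    using fspace.subspace_inter[OF cycles_subspace W] K by simp
  have G: "cycles TYPE('f) (insert t K) m \<inter> W \<subseteq> fspace.span ((\<lambda>\<tau>. indicator {\<tau>}) ` insert t K)"
    using chains_subset_span[of "insert t K"] K by (auto simp: cycles_def)
  have "{v \<in> cycles TYPE('f) (insert t K) m \<inter> W. v t = 0} = cycles TYPE('f) K m \<inter> W"
    using cycles_eq_vanishing_at[OF t] by auto
  then show ?thesis
    using fdim_eq_fdim_vanishing_at[OF S _ G, of t] K by simp
qed

lemma bd_eq_0_without_cofaces:
  assumes "c \<in> chains F K m" "\<And>v. v \<notin> \<sigma> \<Longrightarrow> insert v \<sigma> \<notin> K"
  shows "bd c \<sigma> = 0"
proof -
  have "{v. v \<notin> \<sigma> \<and> c (insert v \<sigma>) \<noteq> 0} = {}"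
    using assms by (auto simp: chains_def)
  then show ?thesis by (simp only: bd_def sum.empty)
qed

section \<open>Persistence diagram counts as sums of persistent ranks\<close>

lemma set_take_eq_insert_nth:
  assumes "1 \<le> i" "i \<le> length L"
  shows "set (take i L) = insert (L ! (i - 1)) (set (take (i - 1) L))"
  using take_Suc_conv_app_nth[of "i - 1" L] assms by simp

lemma nth_notin_set_take:
  assumes "distinct L" "i < length L"
  shows "L ! i \<notin> set (take i L)"
  using assms distinct_take[of L "Suc i"] by (simp add: take_Suc_conv_app_nth)

lemma prank_diff_prev:
  fixes L :: "'v::linorder set list"
  assumes "distinct L" "1 \<le> i" "i \<le> length L"
  shows "prank TYPE('f::field) L k i t - prank TYPE('f) L k (i - 1) t =
    (if \<exists>v \<in> cycles TYPE('f) (set (take i L)) k. v (L ! (i - 1)) \<noteq> 0 then 1 else 0)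
  - (if \<exists>v \<in> cycles TYPE('f) (set (take i L)) k \<inter> boundaries TYPE('f) (set (take t L)) k.
        v (L ! (i - 1)) \<noteq> 0 then 1 else 0)"
proof -
  have new: "L ! (i - 1) \<notin> set (take (i - 1) L)"
    using assms by (simp add: nth_notin_set_take)
  note step = fdim_cycles_insert_inter[OF finite_set new, where 'f='f and m=k]
  show ?thesis
    unfolding prank_def set_take_eq_insert_nth[OF assms(2,3)]
    using step[OF boundaries_subspace[of "set (take t L)" "TYPE('f)" k]]
      step[OF fspace.subspace_UNIV]
    by simp
qed

lemma pmult_nonneg:
  fixes L :: "'v::linorder set list"
  assumes "distinct L" "1 \<le> i" "i \<le> length L"
  shows "pmult TYPE('f::field) L k i j \<ge> 0"
proof -
  have "boundaries TYPE('f) (set (take (j - 1) L)) k \<subseteq> boundaries TYPE('f) (set (take j L)) k"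
    by (rule boundaries_mono) (simp add: set_take_subset_set_take)
  moreover have "pmult TYPE('f) L k i j
      = (prank TYPE('f) L k i (j - 1) - prank TYPE('f) L k (i - 1) (j - 1))
      - (prank TYPE('f) L k i j - prank TYPE('f) L k (i - 1) j)"
    by (simp add: pmult_def)
  ultimately show ?thesis
    unfolding prank_diff_prev[OF assms] by auto
qed

lemma pmult_inf_nonneg:
  fixes L :: "'v::linorder set list"
  assumes "distinct L" "1 \<le> i" "i \<le> length L"
  shows "pmult_inf TYPE('f::field) L k i \<ge> 0"
  unfolding pmult_inf_def prank_diff_prev[OF assms] by auto

lemma sorted_nth_less_iff_less_length_filter:
  fixes xs :: "'a::linorder list"
  assumes "sorted xs" "j < length xs"
  shows "xs ! j < c \<longleftrightarrow> j < length (filter (\<lambda>x. x < c) xs)"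
  using assms
proof (induction xs arbitrary: j)
  case (Cons x xs)
  show ?case
  proof (cases "x < c")
    case True
    then show ?thesis using Cons by (cases j) auto
  next
    case False
    then have "\<forall>y \<in> set (x # xs). \<not> y < c"
      using Cons.prems(1) by auto
    then show ?thesis
      using Cons.prems(2) nth_mem[OF Cons.prems(2)] by (auto simp: filter_empty_conv)
  qed
qed simp

lemma length_filter_less_mono:
  fixes xs :: "'a::linorder list"
  assumes "c \<le> c'"
  shows "length (filter (\<lambda>x. x < c) xs) \<le> length (filter (\<lambda>x. x < c') xs)"
  using assms by (induction xs) auto

definition death_threshold :: "'v set list \<Rightarrow> ('v set \<Rightarrow> real) \<Rightarrow> real \<Rightarrow> nat \<Rightarrow> nat" where
  "death_threshold L w \<alpha> i = length (filter (\<lambda>x. x < \<alpha> * w (L ! (i - 1))) (map w L))"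

lemma death_threshold_iff:
  assumes "sorted (map w L)" "1 \<le> j" "j \<le> length L"
  shows "w (L ! (j - 1)) < \<alpha> * w (L ! (i - 1)) \<longleftrightarrow> j \<le> death_threshold L w \<alpha> i"
  using sorted_nth_less_iff_less_length_filter[OF assms(1), of "j - 1"] assms(2,3)
  by (auto simp: death_threshold_def)

lemma death_threshold_bounds:
  assumes "sorted (map w L)" "w (L ! (i - 1)) > 0" "1 < \<alpha>" "1 \<le> i" "i \<le> length L"
  shows "i \<le> death_threshold L w \<alpha> i" "death_threshold L w \<alpha> i \<le> length L"
proof -
  have "w (L ! (i - 1)) < \<alpha> * w (L ! (i - 1))"
    using assms(2,3) by simp
  then show "i \<le> death_threshold L w \<alpha> i"
    using death_threshold_iff[OF assms(1,4,5)] by blast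
  show "death_threshold L w \<alpha> i \<le> length L"
    unfolding death_threshold_def by (metis length_filter_le length_map)
qed

lemma death_threshold_mono:
  assumes "sorted (map w L)" "0 \<le> \<alpha>" "1 \<le> i" "i \<le> i'" "i' \<le> length L"
  shows "death_threshold L w \<alpha> i \<le> death_threshold L w \<alpha> i'"
proof -
  have "w (L ! (i - 1)) \<le> w (L ! (i' - 1))"
    using sorted_nth_mono[OF assms(1), of "i - 1" "i' - 1"] assms(3-5) by simp
  then show ?thesis
    unfolding death_threshold_def using assms(2)
    by (intro length_filter_less_mono mult_left_mono)
qed

lemma size_filter_mset_sum:
  "size (filter_mset P (sum M A)) = (\<Sum>a\<in>A. size (filter_mset P (M a)))"
  by (induction A rule: infinite_finite_induct) auto

lemma size_filter_mset_replicate: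
  "size (filter_mset P (replicate_mset n x)) = (if P x then n else 0)"
  by (induction n) auto

definition dgm_born_at :: "'f::field itself \<Rightarrow> 'v::linorder set list \<Rightarrow> ('v set \<Rightarrow> real) \<Rightarrow> nat
    \<Rightarrow> nat \<Rightarrow> (real \<times> ereal) multiset" where
  "dgm_born_at F L w k i =
     (\<Sum>j \<in> {i<..length L}.
        if w (L ! (i - 1)) < w (L ! (j - 1))
        then replicate_mset (nat (pmult F L k i j)) (w (L ! (i - 1)), ereal (w (L ! (j - 1))))
        else {#})
   + replicate_mset (nat (pmult_inf F L k i)) (w (L ! (i - 1)), \<infinity>)"

lemma dgm_eq_sum_dgm_born_at: "dgm F L w k = (\<Sum>i \<in> {1..length L}. dgm_born_at F L w k i)"
  by (simp add: dgm_def dgm_born_at_def sum.distrib)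

lemma ratio_ge_iff_death_threshold_less:
  assumes "sorted (map w L)" "w (L ! (i - 1)) > 0" "1 < \<alpha>" "1 \<le> j" "j \<le> length L"
  shows "(w (L ! (i - 1)) < w (L ! (j - 1))
           \<and> ereal (w (L ! (j - 1))) / ereal (w (L ! (i - 1))) \<ge> ereal \<alpha>)
    \<longleftrightarrow> death_threshold L w \<alpha> i < j"
proof -
  have "ereal (w (L ! (j - 1))) / ereal (w (L ! (i - 1))) \<ge> ereal \<alpha>
      \<longleftrightarrow> \<alpha> * w (L ! (i - 1)) \<le> w (L ! (j - 1))"
    using assms(2) by (simp add: pos_le_divide_eq)
  moreover have "\<alpha> * w (L ! (i - 1)) \<le> w (L ! (j - 1)) \<longleftrightarrow> death_threshold L w \<alpha> i < j"
    using death_threshold_iff[OF assms(1,4,5), of \<alpha> i] by auto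
  moreover have "w (L ! (i - 1)) < \<alpha> * w (L ! (i - 1))"
    using assms(2,3) by simp
  ultimately show ?thesis by auto
qed

lemma sum_pmult_telescope:
  assumes "T \<le> length L"
  shows "(\<Sum>j \<in> {T<..length L}. pmult F L k i j)
    = (prank F L k i T - prank F L k (i - 1) T)
      - (prank F L k i (length L) - prank F L k (i - 1) (length L))"
proof -
  define g where "g t = prank F L k (i - 1) t - prank F L k i t" for t
  have "(\<Sum>j \<in> {T<..length L}. pmult F L k i j) = (\<Sum>j = Suc T..length L. g j - g (j - 1))"
    by (simp add: atLeastSucAtMost_greaterThanAtMost pmult_def g_def algebra_simps)
  also have "\<dots> = g (length L) - g T"
    using assms by (rule sum_telescope'')
  finally show ?thesis by (simp add: g_def)
qed

lemma size_filter_dgm_born_at: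
  fixes L :: "'v::linorder set list"
  assumes L: "valid_filtration L w" and pos: "\<forall>\<tau> \<in> set L. w \<tau> > 0" and \<alpha>: "1 < \<alpha>"
    and i: "1 \<le> i" "i \<le> length L"
  defines "P \<equiv> \<lambda>(b, d). d / ereal b \<ge> ereal \<alpha>"
    and "T \<equiv> death_threshold L w \<alpha> i"
  shows "int (size (filter_mset P (dgm_born_at TYPE('f::field) L w k i))) =
    prank TYPE('f) L k i T - prank TYPE('f) L k (i - 1) T"
proof -
  have sorted: "sorted (map w L)" and distinct: "distinct L"
    using L by (simp_all add: valid_filtration_def)
  have b: "w (L ! (i - 1)) > 0" using pos i by auto
  note T = death_threshold_bounds[OF sorted b \<alpha> i, folded T_def]
  have "int (size (filter_mset P
      (if w (L ! (i - 1)) < w (L ! (j - 1))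
       then replicate_mset (nat (pmult TYPE('f) L k i j)) (w (L ! (i - 1)), ereal (w (L ! (j - 1))))
       else {#})))
    = (if T < j then pmult TYPE('f) L k i j else 0)" if "j \<in> {i<..length L}" for j
    using ratio_ge_iff_death_threshold_less[OF sorted b \<alpha>, of j] that i
      pmult_nonneg[OF distinct i, where 'f='f, of k j]
    by (auto simp: size_filter_mset_replicate P_def T_def)
  then have "int (\<Sum>j \<in> {i<..length L}. size (filter_mset P
      (if w (L ! (i - 1)) < w (L ! (j - 1))
       then replicate_mset (nat (pmult TYPE('f) L k i j)) (w (L ! (i - 1)), ereal (w (L ! (j - 1))))
       else {#})))
    = (\<Sum>j \<in> {i<..length L}. if T < j then pmult TYPE('f) L k i j else 0)"
    unfolding of_nat_sum by (rule sum.cong[OF refl])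
  also have "\<dots> = (\<Sum>j \<in> {T<..length L}. pmult TYPE('f) L k i j)"
  proof -
    have "{j \<in> {i<..length L}. T < j} = {T<..length L}"
      using T(1) by auto
    then show ?thesis by (simp add: sum.inter_filter[symmetric])
  qed
  finally show ?thesis
    using b pmult_inf_nonneg[OF distinct i, where 'f='f, of k]
    by (simp add: dgm_born_at_def size_filter_mset_sum size_filter_mset_replicate P_def
        pmult_inf_def sum_pmult_telescope[OF T(2)])
qed

lemma Pi_count_eq_sum_prank:
  fixes L :: "'v::linorder set list"
  assumes "valid_filtration L w" "\<forall>\<tau> \<in> set L. w \<tau> > 0" "1 < \<alpha>"
  shows "int (Pi_count TYPE('f::field) L w k \<alpha>) = (\<Sum>i \<in> {1..length L}.
    prank TYPE('f) L k i (death_threshold L w \<alpha> i)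
    - prank TYPE('f) L k (i - 1) (death_threshold L w \<alpha> i))"
  unfolding Pi_count_def dgm_eq_sum_dgm_born_at size_filter_mset_sum of_nat_sum
  using size_filter_dgm_born_at[OF assms] by (intro sum.cong) auto

section \<open>Inserting a simplex\<close>

lemma sum_skip_index:
  fixes g \<phi> :: "nat \<Rightarrow> 'a::comm_monoid_add"
  assumes "p \<le> n" "g (Suc p) = 0"
    and "\<And>i. i \<in> {1..Suc n} \<Longrightarrow> i \<noteq> Suc p \<Longrightarrow> g i = \<phi> (if i \<le> p then i else i - 1)"
  shows "sum g {1..Suc n} = sum \<phi> {1..n}"
proof -
  have "sum g {1..Suc n} = sum g ({1..Suc n} - {Suc p})"
    using assms(2) by (intro sum.mono_neutral_right) auto
  also have "\<dots> = sum \<phi> {1..n}"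
    by (rule sum.reindex_bij_witness[where i="\<lambda>m. if m \<le> p then m else m + 1"
          and j="\<lambda>i. if i \<le> p then i else i - 1"]) (use assms in auto)
  finally show ?thesis .
qed

lemma sum_01_at_most_one:
  fixes D :: "'a \<Rightarrow> int"
  assumes "finite A" "\<And>i. i \<in> A \<Longrightarrow> D i \<in> {0, 1}"
    and "\<And>i j. i \<in> A \<Longrightarrow> j \<in> A \<Longrightarrow> D i = 1 \<Longrightarrow> D j = 1 \<Longrightarrow> i = j"
  shows "sum D A \<in> {0, 1}"
proof -
  have "sum D A = (\<Sum>i \<in> A. if D i = 1 then 1 else 0)"
    using assms(2) by (intro sum.cong) auto
  also have "\<dots> = int (card {i \<in> A. D i = 1})"
    using assms(1) by (simp add: sum.If_cases Int_def conj_commute)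
  finally have "sum D A = int (card {i \<in> A. D i = 1})" .
  moreover have "card {i \<in> A. D i = 1} \<le> 1"
    using assms(1,3) by (simp add: card_le_Suc0_iff_eq)
  ultimately show ?thesis by auto
qed

locale simplex_insertion =
  fixes L :: "'v::linorder set list" and w :: "'v set \<Rightarrow> real"
    and \<sigma> :: "'v set" and a :: real and p :: nat and \<alpha> :: real
    and L' :: "'v set list" and w' :: "'v set \<Rightarrow> real"
  assumes L: "valid_filtration L w"
    and pos: "\<forall>\<tau> \<in> set L. w \<tau> > 0"
    and \<sigma>_new: "\<sigma> \<notin> set L"
    and a_pos: "a > 0"
    and p: "p \<le> length L"
    and insert: "insert_simplex L w \<sigma> a p = (L', w')"
    and L': "valid_filtration L' w'"
    and \<alpha>: "1 < \<alpha>"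
begin

lemma L'_eq: "L' = take p L @ \<sigma> # drop p L" and w'_eq: "w' = w(\<sigma> := a)"
  using insert by (auto simp: insert_simplex_def)

definition old_index :: "nat \<Rightarrow> nat" where
  "old_index i = (if i \<le> p then i else i - 1)"

lemma length_L': "length L' = length L + 1"
  using p by (simp add: L'_eq)

lemma set_take_L':
  "set (take i L') =
    (if i \<le> p then set (take (old_index i) L) else insert \<sigma> (set (take (old_index i) L)))"
proof (cases "i \<le> p")
  case True
  then show ?thesis using p by (simp add: L'_eq old_index_def)
next
  case False
  define q where "q = i - p - 1"
  have q: "i = p + 1 + q" using False by (simp add: q_def)
  have "take i L' = take p L @ \<sigma> # take q (drop p L)"
    using p q by (simp add: L'_eq)
  moreover have "take (old_index i) L = take p L @ take q (drop p L)"
    using q by (simp add: old_index_def take_add)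
  ultimately show ?thesis using False by auto
qed

lemma nth_L':
  assumes "1 \<le> i" "i \<le> length L + 1" "i \<noteq> p + 1"
  shows "L' ! (i - 1) = L ! (old_index i - 1)"
proof (cases "i \<le> p")
  case True
  then have "i - 1 < length (take p L)" using assms(1) p by simp
  then show ?thesis using True by (simp add: L'_eq old_index_def nth_append)
next
  case False
  then have "L' ! (i - 1) = drop p L ! (i - 2 - p)"
    using assms p by (simp add: L'_eq nth_append nth_Cons')
  then show ?thesis using False assms p by (simp add: old_index_def numeral_2_eq_2)
qed

lemma w'_eq_w: "\<tau> \<in> set L \<Longrightarrow> w' \<tau> = w \<tau>"
  using \<sigma>_new by (auto simp: w'_eq)

lemma pos': "\<forall>\<tau> \<in> set L'. w' \<tau> > 0"
  using pos a_pos by (auto simp: L'_eq w'_eq dest: in_set_takeD in_set_dropD)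

lemma map_w'_L': "map w' L' = map w (take p L) @ a # map w (drop p L)"
  using \<sigma>_new by (auto simp: L'_eq w'_eq dest!: in_set_takeD in_set_dropD)

lemma w_before_le_a: "\<tau> \<in> set (take p L) \<Longrightarrow> w \<tau> \<le> a"
  and a_le_w_after: "\<tau> \<in> set (drop p L) \<Longrightarrow> a \<le> w \<tau>"
  using L' by (auto simp: valid_filtration_def map_w'_L' sorted_append)

lemma old_index_prev: "1 \<le> i \<Longrightarrow> i \<noteq> p + 1 \<Longrightarrow> old_index (i - 1) = old_index i - 1"
  by (auto simp: old_index_def)

lemma old_index_mono: "i \<le> j \<Longrightarrow> old_index i \<le> old_index j"
  by (auto simp: old_index_def)

lemma old_index_death_threshold:
  assumes i: "1 \<le> i" "i \<le> length L + 1" "i \<noteq> p + 1"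
  shows "old_index (death_threshold L' w' \<alpha> i) = death_threshold L w \<alpha> (old_index i)"
proof -
  define c where "c = \<alpha> * w (L ! (old_index i - 1))"
  have "old_index i - 1 < length L"
    using i p by (auto simp: old_index_def)
  then have c': "\<alpha> * w' (L' ! (i - 1)) = c"
    using nth_L'[OF i] w'_eq_w by (simp add: c_def)
  define before where "before = length (filter (\<lambda>x. x < c) (map w (take p L)))"
  define after where "after = length (filter (\<lambda>x. x < c) (map w (drop p L)))"
  have new: "death_threshold L' w' \<alpha> i = before + (if a < c then 1 else 0) + after"
    unfolding death_threshold_def c' map_w'_L' before_def after_def by simp
  have old: "death_threshold L w \<alpha> (old_index i) = before + after"
    unfolding death_threshold_def c_def[symmetric] before_def after_def
    by (metis append_take_drop_id filter_append length_append map_append)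
  show ?thesis
  proof (cases "a < c")
    case True
    then have "before = p"
      using w_before_le_a p unfolding before_def
      by (subst filter_True) (auto simp: min_def dest: order.strict_trans1)
    then show ?thesis using True new old by (simp add: old_index_def)
  next
    case False
    then have "after = 0"
      unfolding after_def by (force simp: filter_empty_conv dest: a_le_w_after)
    moreover have "before \<le> p"
      using p unfolding before_def by (metis length_filter_le length_map length_take min.absorb2)
    ultimately show ?thesis using False new old by (simp add: old_index_def)
  qed
qed

lemma \<sigma>_nonempty: "\<sigma> \<noteq> {}"
proof -
  have "p < length L'" using length_L' p by simp
  then have "L' ! p \<noteq> {}" using L' by (simp add: valid_filtration_def)
  then show ?thesis using p by (simp add: L'_eq nth_append)
qed

lemma no_coface_of_\<sigma>: "v \<notin> \<sigma> \<Longrightarrow> insert v \<sigma> \<notin> set L"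
proof
  assume "v \<notin> \<sigma>" "insert v \<sigma> \<in> set L"
  then obtain q where "q < length L" "L ! q = insert v \<sigma>"
    by (meson in_set_conv_nth)
  then have "\<sigma> \<in> set (take q L)"
    using L \<sigma>_nonempty \<open>v \<notin> \<sigma>\<close> by (auto simp: valid_filtration_def)
  then show False using \<sigma>_new by (meson in_set_takeD)
qed

lemma Pi_count_L':
  "int (Pi_count TYPE('f::field) L' w' k \<alpha>) = (\<Sum>i \<in> {1..length L + 1}.
    prank TYPE('f) L' k i (death_threshold L' w' \<alpha> i)
    - prank TYPE('f) L' k (i - 1) (death_threshold L' w' \<alpha> i))"
  using Pi_count_eq_sum_prank[OF L' pos' \<alpha>] length_L' by simp

lemma sum_prank_old_index:
  "(\<Sum>i \<in> {1..length L + 1}.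
      prank TYPE('f::field) L k (old_index i) (old_index (death_threshold L' w' \<alpha> i))
    - prank TYPE('f) L k (old_index (i - 1)) (old_index (death_threshold L' w' \<alpha> i)))
   = int (Pi_count TYPE('f) L w k \<alpha>)"
  unfolding Pi_count_eq_sum_prank[OF L pos \<alpha>] Suc_eq_plus1[symmetric]
proof (rule sum_skip_index[OF p], unfold old_index_def[symmetric])
  fix i assume "i \<in> {1..Suc (length L)}" "i \<noteq> Suc p"
  then show "prank TYPE('f) L k (old_index i) (old_index (death_threshold L' w' \<alpha> i))
      - prank TYPE('f) L k (old_index (i - 1)) (old_index (death_threshold L' w' \<alpha> i))
    = prank TYPE('f) L k (old_index i) (death_threshold L w \<alpha> (old_index i))
      - prank TYPE('f) L k (old_index i - 1) (death_threshold L w \<alpha> (old_index i))"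
    using old_index_death_threshold[of i] old_index_prev[of i] by simp
qed (simp add: old_index_def)

lemma prank_L'_other_dim:
  assumes "card \<sigma> \<noteq> k + 1" "card \<sigma> \<noteq> k + 2"
  shows "prank F L' k i j = prank F L k (old_index i) (old_index j)"
  unfolding prank_def set_take_L'
  using assms by (simp add: cycles_insert_other_dim boundaries_insert_other_dim)

lemma Pi_count_L'_other_dim:
  assumes "card \<sigma> \<noteq> k + 1" "card \<sigma> \<noteq> k + 2"
  shows "Pi_count TYPE('f::field) L' w' k \<alpha> = Pi_count TYPE('f) L w k \<alpha>"
  using Pi_count_L'[where 'f='f, of k] sum_prank_old_index[where 'f='f, of k]
  unfolding prank_L'_other_dim[OF assms] by simp

lemma prank_L'_dim_k:
  assumes "card \<sigma> = k + 1"
  shows "prank TYPE('f::field) L' k i j = prank TYPE('f) L k (old_index i) (old_index j)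
    + (int (fdim (cycles TYPE('f) (set (take i L')) k))
       - int (fdim (cycles TYPE('f) (set (take (old_index i) L)) k)))"
proof -
  let ?B = "boundaries TYPE('f) (set (take (old_index j) L)) k"
  have B': "boundaries TYPE('f) (set (take j L')) k = ?B"
    unfolding set_take_L' using assms by (simp add: boundaries_insert_other_dim)
  have "v \<sigma> = 0" if v: "v \<in> ?B" for v
  proof -
    obtain c where "c \<in> chains TYPE('f) (set (take (old_index j) L)) (k + 1)" "v = bd c"
      using v unfolding boundaries_def by blast
    then show ?thesis
      using no_coface_of_\<sigma> by (auto intro: bd_eq_0_without_cofaces dest: in_set_takeD)
  qed
  then have "cycles TYPE('f) (set (take i L')) k \<inter> ?B
      = cycles TYPE('f) (set (take (old_index i) L)) k \<inter> ?B"
    unfolding set_take_L' using cycles_eq_vanishing_at[of \<sigma> "set (take (old_index i) L)"] \<sigma>_new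
    by (auto dest: in_set_takeD)
  then show ?thesis unfolding prank_def B' by simp
qed

lemma Pi_count_L'_dim_k:
  assumes "card \<sigma> = k + 1"
  shows "Pi_count TYPE('f::field) L w k \<alpha> \<le> Pi_count TYPE('f) L' w' k \<alpha>"
    "Pi_count TYPE('f) L' w' k \<alpha> \<le> Pi_count TYPE('f) L w k \<alpha> + 1"
proof -
  define \<epsilon> where "\<epsilon> i = int (fdim (cycles TYPE('f) (set (take i L')) k))
     - int (fdim (cycles TYPE('f) (set (take (old_index i) L)) k))" for i
  have "int (Pi_count TYPE('f) L' w' k \<alpha>) = (\<Sum>i \<in> {1..length L + 1}.
      (prank TYPE('f) L k (old_index i) (old_index (death_threshold L' w' \<alpha> i))
       - prank TYPE('f) L k (old_index (i - 1)) (old_index (death_threshold L' w' \<alpha> i)))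
      + (\<epsilon> i - \<epsilon> (i - 1)))"
    unfolding Pi_count_L' prank_L'_dim_k[OF assms] \<epsilon>_def by (simp add: algebra_simps)
  also have "\<dots> = int (Pi_count TYPE('f) L w k \<alpha>) + (\<epsilon> (length L + 1) - \<epsilon> 0)"
    unfolding sum.distrib sum_prank_old_index
    using sum_telescope''[of 0 "length L + 1" \<epsilon>] by simp
  finally have Pi':
      "int (Pi_count TYPE('f) L' w' k \<alpha>) = int (Pi_count TYPE('f) L w k \<alpha>) + \<epsilon> (length L + 1)"
    by (simp add: \<epsilon>_def old_index_def)
  have "\<epsilon> (length L + 1) \<in> {0, 1}"
    using fdim_cycles_insert_inter[OF finite_set \<sigma>_new fspace.subspace_UNIV, where 'f='f and m=k] p
    unfolding \<epsilon>_def set_take_L' by (simp add: old_index_def)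
  then show "Pi_count TYPE('f::field) L w k \<alpha> \<le> Pi_count TYPE('f) L' w' k \<alpha>"
    "Pi_count TYPE('f) L' w' k \<alpha> \<le> Pi_count TYPE('f) L w k \<alpha> + 1"
    using Pi' by auto
qed

(* With the first j simplices of L' present, sigma kills a class represented by a k-cycle among
   the first m simplices of L: its boundary is not yet a boundary there, but lies in Z_m + B. *)
definition kills :: "'f::field itself \<Rightarrow> nat \<Rightarrow> nat \<Rightarrow> nat \<Rightarrow> bool" where
  "kills F k m j \<longleftrightarrow> p < j
     \<and> bd (indicator {\<sigma>} :: 'v set \<Rightarrow> 'f) \<notin> boundaries F (set (take (old_index j) L)) k
     \<and> bd (indicator {\<sigma>} :: 'v set \<Rightarrow> 'f)
         \<in> fspace.span (cycles F (set (take m L)) k \<union> boundaries F (set (take (old_index j) L)) k)"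

lemma kills_mono:
  assumes "kills F k m j" "m \<le> m'" "j \<le> j'" and "kills F k m'' j'"
  shows "kills F k m' j'"
proof -
  have "cycles F (set (take m L)) k \<subseteq> cycles F (set (take m' L)) k"
    using assms(2) by (intro cycles_mono set_take_subset_set_take)
  moreover have
    "boundaries F (set (take (old_index j) L)) k \<subseteq> boundaries F (set (take (old_index j') L)) k"
    using assms(3) by (intro boundaries_mono set_take_subset_set_take old_index_mono)
  ultimately show ?thesis
    using assms(1,4) unfolding kills_def by (meson Un_mono fspace.span_mono subsetD)
qed

lemma prank_L'_dim_Suc_k:
  assumes "card \<sigma> = k + 2"
  shows "prank TYPE('f::field) L' k i j
    = prank TYPE('f) L k (old_index i) (old_index j) - of_bool (kills TYPE('f) k (old_index i) j)"
proof -
  let ?Z = "cycles TYPE('f) (set (take (old_index i) L)) k"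
  let ?B = "boundaries TYPE('f) (set (take (old_index j) L)) k"
  let ?x = "bd (indicator {\<sigma>} :: 'v set \<Rightarrow> 'f)"
  have Z': "cycles TYPE('f) (set (take i L')) k = ?Z"
    unfolding set_take_L' using assms by (simp add: cycles_insert_other_dim)
  have B': "boundaries TYPE('f) (set (take j L')) k
      = (if j \<le> p then ?B else fspace.span (insert ?x ?B))"
    unfolding set_take_L' using boundaries_insert[OF finite_set assms, where F="TYPE('f)"] by simp
  have Z_span: "?Z \<subseteq> fspace.span ((\<lambda>\<tau>. indicator {\<tau>}) ` set (take (old_index i) L))"
    using chains_subset_span[of "set (take (old_index i) L)", where F="TYPE('f)" and m=k]
    by (auto simp: cycles_def)
  have "fdim (?Z \<inter> fspace.span (insert ?x ?B))
      = fdim (?Z \<inter> ?B) + (if ?x \<notin> ?B \<and> ?x \<in> fspace.span (?Z \<union> ?B) then 1 else 0)"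
    by (rule fspace.dim_inter_span_insert[OF cycles_subspace boundaries_subspace _ Z_span]) simp_all
  then show ?thesis
    unfolding prank_def Z' B' kills_def by auto
qed

lemma sum_kills_diff:
  "(\<Sum>i \<in> {1..length L + 1}. of_bool (kills F k (old_index i) (death_threshold L' w' \<alpha> i))
      - of_bool (kills F k (old_index (i - 1)) (death_threshold L' w' \<alpha> i)) :: int) \<in> {0, 1}"
proof (rule sum_01_at_most_one)
  define T where "T i = death_threshold L' w' \<alpha> i" for i
  define D where "D i = (of_bool (kills F k (old_index i) (T i))
      - of_bool (kills F k (old_index (i - 1)) (T i)) :: int)" for i
  have kills_prev: "kills F k (old_index (i - 1)) (T i) \<Longrightarrow> kills F k (old_index i) (T i)" for i
    by (metis kills_mono diff_le_self old_index_mono order_refl)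
  then show "D i \<in> {0, 1}" for i
    unfolding D_def by auto
  have "\<not> i < i'"
    if i: "i \<in> {1..length L + 1}" "i' \<in> {1..length L + 1}" and "D i = 1" "D i' = 1" for i i'
  proof
    assume "i < i'"
    have "kills F k (old_index i) (T i)" "kills F k (old_index i') (T i')"
      and not_kills: "\<not> kills F k (old_index (i' - 1)) (T i')"
      using \<open>D i = 1\<close> \<open>D i' = 1\<close> unfolding D_def by (auto simp: of_bool_def split: if_splits)
    moreover have "T i \<le> T i'"
      unfolding T_def using L' \<alpha> i \<open>i < i'\<close> length_L'
      by (intro death_threshold_mono) (auto simp: valid_filtration_def)
    moreover have "old_index i \<le> old_index (i' - 1)"
      using \<open>i < i'\<close> by (intro old_index_mono) simp
    ultimately have "kills F k (old_index (i' - 1)) (T i')"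
      by (metis kills_mono)
    with not_kills show False by contradiction
  qed
  then show "D i = 1 \<Longrightarrow> D i' = 1 \<Longrightarrow> i = i'"
    if "i \<in> {1..length L + 1}" "i' \<in> {1..length L + 1}" for i i'
    using that by (meson linorder_neqE_nat)
qed simp

lemma Pi_count_L'_dim_Suc_k:
  assumes "card \<sigma> = k + 2"
  shows "int (Pi_count TYPE('f::field) L w k \<alpha>) - 1 \<le> int (Pi_count TYPE('f) L' w' k \<alpha>)"
    "Pi_count TYPE('f) L' w' k \<alpha> \<le> Pi_count TYPE('f) L w k \<alpha>"
proof -
  have "int (Pi_count TYPE('f) L' w' k \<alpha>) = int (Pi_count TYPE('f) L w k \<alpha>)
    - (\<Sum>i \<in> {1..length L + 1}. of_bool (kills TYPE('f) k (old_index i) (death_threshold L' w' \<alpha> i))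
      - of_bool (kills TYPE('f) k (old_index (i - 1)) (death_threshold L' w' \<alpha> i)))"
    unfolding Pi_count_L' prank_L'_dim_Suc_k[OF assms] sum_prank_old_index[symmetric]
      sum_subtractf[symmetric]
    by (rule sum.cong) auto
  then show "int (Pi_count TYPE('f::field) L w k \<alpha>) - 1 \<le> int (Pi_count TYPE('f) L' w' k \<alpha>)"
    "Pi_count TYPE('f) L' w' k \<alpha> \<le> Pi_count TYPE('f) L w k \<alpha>"
    using sum_kills_diff[of "TYPE('f)" k] by auto
qed

end

theorem lemma6p2:
  fixes L :: "('v::linorder) set list" and w :: "'v set \<Rightarrow> real"
    and \<sigma> :: "'v set" and a :: real and p :: nat and k :: nat and \<alpha> :: real
  assumes "valid_filtration L w"
    and "\<forall>\<tau> \<in> set L. w \<tau> > 0"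
    and "\<sigma> \<notin> set L"
    and "a > 0"
    and "p \<le> length L"
    and "insert_simplex L w \<sigma> a p = (L', w')"
    and "valid_filtration L' w'"
    and "1 < \<alpha>"
    and "1 \<le> k"
  shows "(card \<sigma> - 1 \<in> {k, k + 1} \<longrightarrow>
            int (Pi_count TYPE('f::field) L w k \<alpha>) - 1 \<le> int (Pi_count TYPE('f) L' w' k \<alpha>) \<and>
            int (Pi_count TYPE('f) L' w' k \<alpha>) \<le> int (Pi_count TYPE('f) L w k \<alpha>) + 1)
       \<and> (card \<sigma> - 1 \<notin> {k, k + 1} \<longrightarrow>
            Pi_count TYPE('f) L' w' k \<alpha> = Pi_count TYPE('f) L w k \<alpha>)"
proof -
  interpret simplex_insertion L w \<sigma> a p \<alpha> L' w'
    by unfold_locales (fact assms)+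
  have dim_iff: "card \<sigma> - 1 \<in> {k, k + 1} \<longleftrightarrow> card \<sigma> = k + 1 \<or> card \<sigma> = k + 2"
    using \<open>1 \<le> k\<close> by auto
  consider "card \<sigma> = k + 1" | "card \<sigma> = k + 2" | "card \<sigma> \<noteq> k + 1" "card \<sigma> \<noteq> k + 2"
    by blast
  then show ?thesis
  proof cases
    case 1
    then show ?thesis using Pi_count_L'_dim_k[OF 1, where 'f='f] dim_iff by auto
  next
    case 2
    then show ?thesis using Pi_count_L'_dim_Suc_k[OF 2, where 'f='f] dim_iff by auto
  next
    case 3
    then show ?thesis using Pi_count_L'_other_dim[OF 3, where 'f='f] dim_iff by auto
  qed
qed

end
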